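(* Let $\mathcal{X}$ be finite, let $U=(U_n)$ and $V=(V_n)$ be channel sequences with $U_n:\mathcal{X}^n\rightsquigarrow\mathcal{Y}_n$, $V_n:\mathcal{X}^n\rightsquigarrow\mathcal{Z}_n$ ($\mathcal{Y}_n,\mathcal{Z}_n$ countable), and $V_n=f_n(U_n)$ for functions $f_n:\mathcal{Y}_n\to\mathcal{Z}_n$. Suppose $\mathcal{Y}_n=\mathcal{A}_n\sqcup\mathcal{B}_n$, $\mathcal{Z}_n=\mathcal{A}'_n\sqcup\mathcal{B}'_n$ with $f_n(\mathcal{A}_n)=\mathcal{A}'_n$ and $f_n$ bijective from $\mathcal{A}_n$ onto $\mathcal{A}'_n$. Let $\beta_n(x)=\Pr_{U_n(y|x)}[y\in\mathcal{B}_n]$, $\overline{\beta}_n=\max_x\beta_n(x)$, and suppose $\lim_{n\to\infty}\overline{\beta}_n=0$. Then $\mathbf{C}(U)=\mathbf{C}(V)$. If, in addition, one of $\mathbf{I}(U)$, $\mathbf{I}(V)$ exists, then both exist and $\mathbf{I}(U)=\mathbf{I}(V)$. Moreover, $U$ is strictly information stable if and only if $V$ is.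
   Context: A channel $W:\mathcal{A}\rightsquigarrow\mathcal{B}$ is a family of probability distributions $W(\cdot|a)$ on $\mathcal{B}$; $f(W)(c|a)=\sum_{b\in f^{-1}(c)}W(b|a)$. For a distribution $p$: $p\circ W(a,b)=p(a)W(b|a)$, $p\bullet W(b)=\sum_a p\circ W(a,b)$; $\mathbf{i}(W,p,a,b)=\log_2\frac{W(b|a)}{p\bullet W(b)}$ if $W(b|a)>0$ and $p\bullet W(b)>0$, else $0$; $\mathbf{I}(W,p)=\mathbb{E}_{p\circ W}[\mathbf{i}]$, $\mathbf{I}(W)=\max_p\mathbf{I}(W,p)$. For a channel sequence $V$, $\mathbf{I}(V)=\lim_n\mathbf{I}(V_n)/n$ when it exists. A $(W,M,\varepsilon)$-coding scheme: $M$ distinct inputs $x_1,\dots,x_M$ and disjoint output sets $\mathcal{R}_i$ with $\sum_{y\notin\mathcal{R}_i}W(y|x_i)\le\varepsilon$ for all $i$. $R\ge0$ is achievable if for each $\varepsilon>0$ there is $n_0$ with a $(V_n,\lceil2^{nR}\rceil,\varepsilon)$-coding scheme for all $n\ge n_0$; $\mathbf{C}(V)$ is the supremum of achievable rates. $V$ is strictly information stable if $\mathbf{I}(V)$ exists and there are distributions $p^*_n$ on $\mathcal{X}^n$ with $\lim_n\Pr_{p^*_n\circ V_n}\big[|\mathbf{i}(V_n,p^*_n,x,y)/n-\mathbf{I}(V)|>\delta\big]=0$ for every $\delta>0$. *)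

theory Defs
  imports "HOL-Probability.Probability"
begin

text \<open>A channel from an input type 'a to a countable output type 'b is a map
  'a \<Rightarrow> 'b pmf; W(b|a) = pmf (W a) b.  Inputs of block length n are lists of
  length n over the finite alphabet 'x.\<close>

definition inputs :: "nat \<Rightarrow> 'x list set" where
  "inputs n = {xs. length xs = n}"

definition out_dist :: "'a pmf \<Rightarrow> ('a \<Rightarrow> 'b pmf) \<Rightarrow> 'b pmf" where
  "out_dist p W = bind_pmf p W"

definition joint_dist :: "'a pmf \<Rightarrow> ('a \<Rightarrow> 'b pmf) \<Rightarrow> ('a \<times> 'b) pmf" where
  "joint_dist p W = bind_pmf p (\<lambda>a. map_pmf (\<lambda>b. (a, b)) (W a))"

definition info_dens :: "('a \<Rightarrow> 'b pmf) \<Rightarrow> 'a pmf \<Rightarrow> 'a \<Rightarrow> 'b \<Rightarrow> real" where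
  "info_dens W p a b =
     (if pmf (W a) b > 0 \<and> pmf (out_dist p W) b > 0
      then log 2 (pmf (W a) b / pmf (out_dist p W) b) else 0)"

definition mutual_info :: "('a \<Rightarrow> 'b pmf) \<Rightarrow> 'a pmf \<Rightarrow> real" where
  "mutual_info W p = measure_pmf.expectation (joint_dist p W) (\<lambda>(a, b). info_dens W p a b)"

definition chan_info :: "('x list \<Rightarrow> 'b pmf) \<Rightarrow> nat \<Rightarrow> real" where
  "chan_info W n = Sup {mutual_info W p | p. set_pmf p \<subseteq> inputs n}"

definition info_rate_exists :: "(nat \<Rightarrow> 'x list \<Rightarrow> 'b pmf) \<Rightarrow> bool" where
  "info_rate_exists V \<longleftrightarrow> convergent (\<lambda>n. chan_info (V n) n / real n)"

definition info_rate :: "(nat \<Rightarrow> 'x list \<Rightarrow> 'b pmf) \<Rightarrow> real" where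
  "info_rate V = lim (\<lambda>n. chan_info (V n) n / real n)"

definition coding_scheme :: "('a \<Rightarrow> 'b pmf) \<Rightarrow> 'a set \<Rightarrow> nat \<Rightarrow> real \<Rightarrow> bool" where
  "coding_scheme W S M \<epsilon> \<longleftrightarrow>
     (\<exists>x :: nat \<Rightarrow> 'a. \<exists>R :: nat \<Rightarrow> 'b set.
        inj_on x {..<M} \<and> x ` {..<M} \<subseteq> S \<and> disjoint_family_on R {..<M} \<and>
        (\<forall>i<M. measure_pmf.prob (W (x i)) (- R i) \<le> \<epsilon>))"

definition achievable :: "(nat \<Rightarrow> 'x list \<Rightarrow> 'b pmf) \<Rightarrow> real \<Rightarrow> bool" where
  "achievable V R \<longleftrightarrow> R \<ge> 0 \<and>
     (\<forall>\<epsilon>>0. \<exists>n0. \<forall>n\<ge>n0.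
        coding_scheme (V n) (inputs n) (nat \<lceil>2 powr (real n * R)\<rceil>) \<epsilon>)"

definition capacity :: "(nat \<Rightarrow> 'x list \<Rightarrow> 'b pmf) \<Rightarrow> real" where
  "capacity V = Sup {R. achievable V R}"

definition strictly_info_stable :: "(nat \<Rightarrow> 'x list \<Rightarrow> 'b pmf) \<Rightarrow> bool" where
  "strictly_info_stable V \<longleftrightarrow> info_rate_exists V \<and>
     (\<exists>p :: nat \<Rightarrow> 'x list pmf. (\<forall>n. set_pmf (p n) \<subseteq> inputs n) \<and>
        (\<forall>\<delta>>0. (\<lambda>n. measure_pmf.prob (joint_dist (p n) (V n))
                   {(x, y). \<bar>info_dens (V n) (p n) x y / real n - info_rate V\<bar> > \<delta>})
                 \<longlonglongrightarrow> 0))"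

end

theory Submission
  imports Defs
begin

(* Fix an input distribution p and let D = i_U - i_V o f be the loss of information density
   caused by merging outputs through f.  Two sub-densities of the joint distribution control D:
   2^(-D) has expectation at most 1, which gives the data processing inequality E D >= 0 and
   P(-D >= c) <= 2^(-c); and on A, where f is injective, 2^D is bounded by the ratio
   q_V(f y) / q_U(y) of output probabilities, whose expectation is at most the q_V-mass of f(A).
   Off A, D is at most the self-information -log p(x) plus a third sub-density.  Hence
   E D <= 2 / ln 2 + beta * log |X^n| and P(|D| >= c) <= beta + 2 * 2^(-c), so
   I(V_n) <= I(U_n) <= I(V_n) + o(n), and i_U / n and i_V / n are asymptotically equal in
   probability.  For the capacity, codes for V pull back along f, and codes for U push forward
   to codes for V with decoding sets f(R_i \<inter> A), at an extra error cost of at most beta. *)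

lemma log_le_minus_one_over_ln:
  assumes "1 < b" "0 < x"
  shows "log b x \<le> (x - 1) / ln b"
  using ln_le_minus_one[of x] assms by (simp add: log_def divide_right_mono)

lemma measure_pmf_subadditive:
  "measure_pmf.prob M (S \<union> T) \<le> measure_pmf.prob M S + measure_pmf.prob M T"
  by (rule measure_subadditive) (auto simp: measure_pmf.emeasure_finite)

lemma nn_integral_bound_integrable:
  fixes g :: "'a \<Rightarrow> real" and M :: "'a pmf"
  assumes nonneg: "AE x in M. 0 \<le> g x" and bound: "(\<integral>\<^sup>+x. g x \<partial>M) \<le> ennreal c" and "0 \<le> c"
  shows "integrable M g" "integral\<^sup>L M g \<le> c"
proof -
  show int: "integrable M g"
    using assms by (intro integrableI_nonneg) (auto simp: top.not_eq_extremum le_less_trans)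
  have "ennreal (integral\<^sup>L M g) = (\<integral>\<^sup>+x. g x \<partial>M)"
    using int nonneg by (intro nn_integral_eq_integral[symmetric])
  with bound \<open>0 \<le> c\<close> show "integral\<^sup>L M g \<le> c"
    by (metis ennreal_le_iff)
qed

lemma subdensity_integrable:
  fixes g :: "'a \<Rightarrow> real" and M :: "'a pmf"
  assumes "AE x in M. 0 \<le> g x" and "(\<integral>\<^sup>+x. g x \<partial>M) \<le> 1"
  shows "integrable M g" "integral\<^sup>L M g \<le> 1"
  using nn_integral_bound_integrable[where c=1] assms by simp_all

lemma prob_ge_le_of_nn_integral_le_1:
  fixes g :: "'a \<Rightarrow> real" and M :: "'a pmf"
  assumes nonneg: "AE x in M. 0 \<le> g x" and bound: "(\<integral>\<^sup>+x. g x \<partial>M) \<le> 1" and "0 < t"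
  shows "measure_pmf.prob M {x. t \<le> g x} \<le> 1 / t"
proof -
  have "integrable M g" "integral\<^sup>L M g \<le> 1"
    using subdensity_integrable[OF nonneg bound] by auto
  with integral_Markov_inequality_measure[of M g UNIV t] nonneg \<open>0 < t\<close>
  show ?thesis by (simp add: divide_right_mono order_trans)
qed

section \<open>Information densities\<close>

lemma set_pmf_joint_dist:
  "set_pmf (joint_dist p W) = {(a, b). a \<in> set_pmf p \<and> b \<in> set_pmf (W a)}"
  by (auto simp: joint_dist_def)

lemma map_fst_joint_dist: "map_pmf fst (joint_dist p W) = p"
  by (simp add: joint_dist_def map_bind_pmf map_pmf_comp o_def bind_return_pmf' flip: map_pmf_def)

lemma map_snd_joint_dist: "map_pmf snd (joint_dist p W) = out_dist p W"
  by (simp add: joint_dist_def out_dist_def map_bind_pmf map_pmf_comp o_def)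

lemma pmf_out_dist_ge: "pmf p a * pmf (W a) b \<le> pmf (out_dist p W) b"
proof -
  have "ennreal (pmf (W a) b) * emeasure p {a} = (\<integral>\<^sup>+x. pmf (W a) b * indicator {a} x \<partial>p)"
    by (simp add: nn_integral_cmult_indicator)
  also have "\<dots> \<le> (\<integral>\<^sup>+x. pmf (W x) b \<partial>p)"
    by (intro nn_integral_mono) (simp split: split_indicator)
  also have "\<dots> = pmf (out_dist p W) b"
    by (simp add: out_dist_def ennreal_pmf_bind)
  finally show ?thesis
    by (simp add: emeasure_pmf_single ennreal_mult'[symmetric] mult.commute)
qed

lemma pmf_out_dist_pos:
  "a \<in> set_pmf p \<Longrightarrow> b \<in> set_pmf (W a) \<Longrightarrow> 0 < pmf (out_dist p W) b"
  using pmf_out_dist_ge[of p a W b] by (smt (verit) mult_pos_pos pmf_positive)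

lemma info_dens_on_support:
  "a \<in> set_pmf p \<Longrightarrow> b \<in> set_pmf (W a) \<Longrightarrow>
     info_dens W p a b = log 2 (pmf (W a) b / pmf (out_dist p W) b)"
  using pmf_out_dist_pos[of a p b W] by (simp add: info_dens_def pmf_positive)

lemma info_dens_le_neg_log_pmf:
  assumes a: "a \<in> set_pmf p" and b: "b \<in> set_pmf (W a)"
  shows "info_dens W p a b \<le> - log 2 (pmf p a)"
proof -
  have pos: "0 < pmf p a" "0 < pmf (W a) b" "0 < pmf (out_dist p W) b"
    using a b pmf_out_dist_pos by (auto simp: pmf_positive)
  have "pmf (W a) b / pmf (out_dist p W) b \<le> 1 / pmf p a"
    using pmf_out_dist_ge[of p a W b] pos by (simp add: field_simps)
  then have "log 2 (pmf (W a) b / pmf (out_dist p W) b) \<le> log 2 (1 / pmf p a)"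
    using pos by simp
  with pos show ?thesis by (simp add: info_dens_on_support[where W=W, OF a b] log_divide)
qed

text \<open>On the support, \<open>inv_dens W p a b = 2 powr - info_dens W p a b\<close>.\<close>
definition inv_dens :: "('a \<Rightarrow> 'b pmf) \<Rightarrow> 'a pmf \<Rightarrow> 'a \<Rightarrow> 'b \<Rightarrow> real" where
  "inv_dens W p a b = pmf (out_dist p W) b / pmf (W a) b"

lemma neg_info_dens_le_inv_dens:
  assumes a: "a \<in> set_pmf p" and b: "b \<in> set_pmf (W a)"
  shows "- info_dens W p a b \<le> (inv_dens W p a b - 1) / ln 2"
proof -
  have pos: "0 < pmf (W a) b" "0 < pmf (out_dist p W) b"
    using a b pmf_out_dist_pos by (auto simp: pmf_positive)
  then have "- info_dens W p a b = log 2 (inv_dens W p a b)"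
    by (simp add: info_dens_on_support[where W=W, OF a b] inv_dens_def log_divide)
  also have "\<dots> \<le> (inv_dens W p a b - 1) / ln 2"
    using pos by (intro log_le_minus_one_over_ln) (auto simp: inv_dens_def)
  finally show ?thesis .
qed

lemma nn_integral_joint_dist_divide_le:
  fixes g :: "'a \<Rightarrow> 'b \<Rightarrow> real"
  assumes "\<And>a b. 0 \<le> g a b"
  shows "(\<integral>\<^sup>+x. g (fst x) (snd x) / pmf (W (fst x)) (snd x) \<partial>joint_dist p W)
           \<le> (\<integral>\<^sup>+a. \<integral>\<^sup>+b. g a b \<partial>count_space UNIV \<partial>p)"
proof -
  have "(\<integral>\<^sup>+b. g a b / pmf (W a) b \<partial>W a) \<le> (\<integral>\<^sup>+b. g a b \<partial>count_space UNIV)" for a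
  proof -
    have "pmf (W a) b * (g a b / pmf (W a) b) \<le> g a b" for b
      using assms[of a b] by (cases "pmf (W a) b = 0") auto
    then show ?thesis
      using assms by (auto simp: nn_integral_measure_pmf ennreal_mult[symmetric] intro!: nn_integral_mono)
  qed
  then show ?thesis
    by (auto simp: joint_dist_def intro!: nn_integral_mono)
qed

lemma nn_integral_count_space_pmf: "(\<integral>\<^sup>+b. pmf q b \<partial>count_space UNIV) = 1"
  by (simp add: nn_integral_pmf measure_pmf.emeasure_space_1[simplified])

lemma inv_dens_integrable:
  "integrable (joint_dist p W) (\<lambda>x. inv_dens W p (fst x) (snd x))"
  "(\<integral>x. inv_dens W p (fst x) (snd x) \<partial>joint_dist p W) \<le> 1"
proof -
  have "AE x in joint_dist p W. 0 \<le> inv_dens W p (fst x) (snd x)"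
    by (simp add: inv_dens_def)
  moreover have "(\<integral>\<^sup>+x. inv_dens W p (fst x) (snd x) \<partial>joint_dist p W) \<le> 1"
    using nn_integral_joint_dist_divide_le[where g="\<lambda>a b. pmf (out_dist p W) b" and W=W and p=p]
    by (simp add: inv_dens_def nn_integral_count_space_pmf)
  ultimately show "integrable (joint_dist p W) (\<lambda>x. inv_dens W p (fst x) (snd x))"
    "(\<integral>x. inv_dens W p (fst x) (snd x) \<partial>joint_dist p W) \<le> 1"
    by (rule subdensity_integrable)+
qed

lemma info_dens_integrable:
  assumes fin: "finite (set_pmf p)"
  shows "integrable (joint_dist p W) (\<lambda>x. info_dens W p (fst x) (snd x))"
proof (rule Bochner_Integration.integrable_bound)
  define C where "C = (\<Sum>a\<in>set_pmf p. \<bar>log 2 (pmf p a)\<bar>)"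
  show "integrable (joint_dist p W) (\<lambda>x. C + inv_dens W p (fst x) (snd x) / ln 2)"
    using inv_dens_integrable(1)
    by (intro Bochner_Integration.integrable_add integrable_divide_zero) auto
  show "AE x in joint_dist p W.
          norm (info_dens W p (fst x) (snd x)) \<le> norm (C + inv_dens W p (fst x) (snd x) / ln 2)"
  proof (unfold AE_measure_pmf_iff, intro ballI)
    fix x assume "x \<in> set_pmf (joint_dist p W)"
    then have a: "fst x \<in> set_pmf p" and b: "snd x \<in> set_pmf (W (fst x))"
      by (auto simp: set_pmf_joint_dist)
    have "\<bar>log 2 (pmf p (fst x))\<bar> \<le> C"
      unfolding C_def using a fin by (intro member_le_sum) auto
    moreover have "0 \<le> inv_dens W p (fst x) (snd x) / ln 2"
      by (simp add: inv_dens_def)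
    moreover have "(inv_dens W p (fst x) (snd x) - 1) / ln 2 \<le> inv_dens W p (fst x) (snd x) / ln 2"
      by (simp add: divide_right_mono)
    ultimately show "norm (info_dens W p (fst x) (snd x)) \<le> norm (C + inv_dens W p (fst x) (snd x) / ln 2)"
      using info_dens_le_neg_log_pmf[where W=W, OF a b] neg_info_dens_le_inv_dens[where W=W, OF a b]
      by auto
  qed
qed simp

lemma entropy_le_log_card:
  fixes p :: "'a pmf"
  assumes T: "finite T" "set_pmf p \<subseteq> T"
  shows "(\<integral>a. - log 2 (pmf p a) \<partial>p) \<le> log 2 (card T)"
proof -
  let ?S = "set_pmf p"
  have fin: "finite ?S" and card: "card ?S \<le> card T" "0 < card T"
    using T set_pmf_not_empty[of p] by (auto intro: finite_subset card_mono simp: card_gt_0_iff)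
  have pointwise: "pmf p a * - log 2 (pmf p a) \<le> pmf p a * log 2 (card T) + (1 / card T - pmf p a) / ln 2"
    if "a \<in> ?S" for a
  proof -
    have pa: "0 < pmf p a" using that by (simp add: pmf_positive)
    have "log 2 (1 / (pmf p a * card T)) \<le> (1 / (pmf p a * card T) - 1) / ln 2"
      using pa card by (intro log_le_minus_one_over_ln) auto
    then have "pmf p a * log 2 (1 / (pmf p a * card T)) \<le> pmf p a * ((1 / (pmf p a * card T) - 1) / ln 2)"
      using pa by (intro mult_left_mono) auto
    moreover have "log 2 (1 / (pmf p a * card T)) = - log 2 (pmf p a) - log 2 (card T)"
      using pa card by (simp add: log_divide log_mult)
    moreover have "pmf p a * ((1 / (pmf p a * card T) - 1) / ln 2) = (1 / card T - pmf p a) / ln 2"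
      using pa card by (simp add: field_simps)
    ultimately show ?thesis
      by (simp add: right_diff_distrib)
  qed
  have "(\<integral>a. - log 2 (pmf p a) \<partial>p) = (\<Sum>a\<in>?S. pmf p a * - log 2 (pmf p a))"
    using fin by (subst integral_measure_pmf_real[where A="?S"]) (auto simp: mult.commute)
  also have "\<dots> \<le> (\<Sum>a\<in>?S. pmf p a * log 2 (card T) + (1 / card T - pmf p a) / ln 2)"
    using pointwise by (rule sum_mono)
  also have "\<dots> = log 2 (card T) + (card ?S / card T - 1) / ln 2"
    using sum_pmf_eq_1[OF fin, of p]
    by (simp add: sum.distrib sum_subtractf flip: sum_distrib_right sum_divide_distrib)
  also have "\<dots> \<le> log 2 (card T)"
    using card by (simp add: divide_nonpos_pos field_simps)
  finally show ?thesis .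
qed

lemma mutual_info_le_log_card:
  assumes T: "finite T" "set_pmf p \<subseteq> T"
  shows "mutual_info W p \<le> log 2 (card T)"
proof -
  have fin: "finite (set_pmf p)" using T finite_subset by auto
  have "integrable (map_pmf fst (joint_dist p W)) (\<lambda>a. - log 2 (pmf p a))"
    using fin by (simp add: map_fst_joint_dist integrable_measure_pmf_finite)
  then have int: "integrable (joint_dist p W) (\<lambda>x. - log 2 (pmf p (fst x)))"
    by simp
  have "mutual_info W p = (\<integral>x. info_dens W p (fst x) (snd x) \<partial>joint_dist p W)"
    by (simp add: mutual_info_def split_beta')
  also have "\<dots> \<le> (\<integral>x. - log 2 (pmf p (fst x)) \<partial>joint_dist p W)"
    using info_dens_integrable[OF fin] int info_dens_le_neg_log_pmf
    by (intro integral_mono_AE) (auto simp: AE_measure_pmf_iff set_pmf_joint_dist)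
  also have "\<dots> = (\<integral>a. - log 2 (pmf p a) \<partial>map_pmf fst (joint_dist p W))"
    by simp
  also have "\<dots> \<le> log 2 (card T)"
    unfolding map_fst_joint_dist by (rule entropy_le_log_card[OF T])
  finally show ?thesis .
qed

lemma pmf_le_pmf_map: "pmf M y \<le> pmf (map_pmf f M) (f y)"
proof -
  have "measure M {y} \<le> measure M (f -` {f y})"
    by (rule measure_pmf.finite_measure_mono) auto
  then show ?thesis by (simp add: pmf_map measure_pmf_single)
qed

section \<open>Merging channel outputs\<close>

locale merged_channel =
  fixes W :: "'a \<Rightarrow> 'b::countable pmf" and W' :: "'a \<Rightarrow> 'c pmf" and f :: "'b \<Rightarrow> 'c"
    and p :: "'a pmf"
  assumes finite_support: "finite (set_pmf p)"
    and merged: "\<And>a. a \<in> set_pmf p \<Longrightarrow> W' a = map_pmf f (W a)"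
begin

lemma joint_dist_merged: "joint_dist p W' = map_pmf (\<lambda>x. (fst x, f (snd x))) (joint_dist p W)"
  unfolding joint_dist_def map_bind_pmf by (rule bind_pmf_cong) (auto simp: merged map_pmf_comp)

lemma out_dist_merged: "out_dist p W' = map_pmf f (out_dist p W)"
  unfolding out_dist_def map_bind_pmf by (rule bind_pmf_cong) (auto simp: merged)

lemma prob_joint_dist_merged:
  "measure_pmf.prob (joint_dist p W') S = measure_pmf.prob (joint_dist p W) ((\<lambda>x. (fst x, f (snd x))) -` S)"
  by (simp add: joint_dist_merged)

lemma joint_support:
  assumes "x \<in> set_pmf (joint_dist p W)"
  shows "fst x \<in> set_pmf p" "snd x \<in> set_pmf (W (fst x))" "f (snd x) \<in> set_pmf (W' (fst x))"
    and "0 < pmf (W (fst x)) (snd x)" "0 < pmf (out_dist p W) (snd x)"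
    and "pmf (W (fst x)) (snd x) \<le> pmf (W' (fst x)) (f (snd x))"
    and "pmf (out_dist p W) (snd x) \<le> pmf (out_dist p W') (f (snd x))"
proof -
  show a: "fst x \<in> set_pmf p" and b: "snd x \<in> set_pmf (W (fst x))"
    using assms by (auto simp: set_pmf_joint_dist)
  then show "f (snd x) \<in> set_pmf (W' (fst x))" by (simp add: merged)
  show "0 < pmf (W (fst x)) (snd x)" using b by (simp add: pmf_positive)
  show "0 < pmf (out_dist p W) (snd x)" using a b by (rule pmf_out_dist_pos)
  show "pmf (W (fst x)) (snd x) \<le> pmf (W' (fst x)) (f (snd x))"
    using a by (simp add: merged pmf_le_pmf_map)
  show "pmf (out_dist p W) (snd x) \<le> pmf (out_dist p W') (f (snd x))"
    by (simp add: out_dist_merged pmf_le_pmf_map)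
qed

definition info_loss :: "'a \<times> 'b \<Rightarrow> real" where
  "info_loss x = info_dens W p (fst x) (snd x) - info_dens W' p (fst x) (f (snd x))"

definition loss_ratio :: "'a \<times> 'b \<Rightarrow> real" where
  "loss_ratio x = inv_dens W p (fst x) (snd x) / inv_dens W' p (fst x) (f (snd x))"

lemma info_loss_eq_neg_log_loss_ratio:
  assumes "x \<in> set_pmf (joint_dist p W)"
  shows "info_loss x = - log 2 (loss_ratio x)" "0 < loss_ratio x"
proof -
  note s = joint_support[OF assms]
  have pos: "0 < pmf (W' (fst x)) (f (snd x))" "0 < pmf (out_dist p W') (f (snd x))"
    using s by linarith+
  show "0 < loss_ratio x"
    using s pos by (simp add: loss_ratio_def inv_dens_def)
  show "info_loss x = - log 2 (loss_ratio x)"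
    using s pos
    by (simp add: info_loss_def loss_ratio_def inv_dens_def info_dens_on_support log_divide log_mult)
qed

lemma nn_integral_loss_ratio: "(\<integral>\<^sup>+x. loss_ratio x \<partial>joint_dist p W) \<le> 1"
proof -
  let ?q = "out_dist p W" and ?q' = "out_dist p W'"
  define g where "g a b = pmf ?q b / pmf ?q' (f b) * pmf (W' a) (f b)" for a b
  have "(\<integral>\<^sup>+x. loss_ratio x \<partial>joint_dist p W)
      = (\<integral>\<^sup>+x. g (fst x) (snd x) / pmf (W (fst x)) (snd x) \<partial>joint_dist p W)"
    by (simp add: loss_ratio_def inv_dens_def g_def field_simps)
  also have "\<dots> \<le> (\<integral>\<^sup>+a. \<integral>\<^sup>+b. g a b \<partial>count_space UNIV \<partial>p)"
    by (rule nn_integral_joint_dist_divide_le) (simp add: g_def)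
  also have "\<dots> = (\<integral>\<^sup>+b. \<integral>\<^sup>+a. g a b \<partial>p \<partial>count_space UNIV)"
    by (rule nn_integral_count_space_nn_integral) auto
  also have "\<dots> = (\<integral>\<^sup>+b. ennreal (pmf ?q b / pmf ?q' (f b)) * (\<integral>\<^sup>+a. pmf (W' a) (f b) \<partial>p)
                     \<partial>count_space UNIV)"
    by (rule nn_integral_cong, subst nn_integral_cmult[symmetric])
       (auto simp: g_def ennreal_mult[symmetric] intro!: nn_integral_cong)
  also have "\<dots> = (\<integral>\<^sup>+b. ennreal (pmf ?q b / pmf ?q' (f b)) * pmf ?q' (f b) \<partial>count_space UNIV)"
    by (simp add: out_dist_def ennreal_pmf_bind)
  also have "\<dots> \<le> (\<integral>\<^sup>+b. pmf ?q b \<partial>count_space UNIV)"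
    by (intro nn_integral_mono) (simp add: ennreal_mult'[symmetric] divide_le_eq_1 mult_le_cancel_left1)
  finally show ?thesis by (simp add: nn_integral_count_space_pmf)
qed

lemma loss_ratio_integrable:
  "integrable (joint_dist p W) loss_ratio" "integral\<^sup>L (joint_dist p W) loss_ratio \<le> 1"
proof -
  have "AE x in joint_dist p W. 0 \<le> loss_ratio x"
    using info_loss_eq_neg_log_loss_ratio(2) by (auto simp: AE_measure_pmf_iff less_imp_le)
  then show "integrable (joint_dist p W) loss_ratio" "integral\<^sup>L (joint_dist p W) loss_ratio \<le> 1"
    using subdensity_integrable[OF _ nn_integral_loss_ratio] by simp_all
qed

lemma integral_info_loss:
  "integrable (joint_dist p W) info_loss"
  "mutual_info W p - mutual_info W' p = integral\<^sup>L (joint_dist p W) info_loss"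
proof -
  have int_W: "integrable (joint_dist p W) (\<lambda>x. info_dens W p (fst x) (snd x))"
    by (rule info_dens_integrable[OF finite_support])
  have "integrable (joint_dist p W') (\<lambda>x. info_dens W' p (fst x) (snd x))"
    by (rule info_dens_integrable[OF finite_support])
  then have int_W': "integrable (joint_dist p W) (\<lambda>x. info_dens W' p (fst x) (f (snd x)))"
    by (simp add: joint_dist_merged)
  show "integrable (joint_dist p W) info_loss"
    unfolding info_loss_def[abs_def] using int_W int_W' by simp
  have "mutual_info W' p = (\<integral>x. info_dens W' p (fst x) (f (snd x)) \<partial>joint_dist p W)"
    by (simp add: mutual_info_def joint_dist_merged split_beta')
  moreover have "mutual_info W p = (\<integral>x. info_dens W p (fst x) (snd x) \<partial>joint_dist p W)"
    by (simp add: mutual_info_def split_beta')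
  ultimately show "mutual_info W p - mutual_info W' p = integral\<^sup>L (joint_dist p W) info_loss"
    unfolding info_loss_def[abs_def] using int_W int_W' by simp
qed

lemma mutual_info_merged_le: "mutual_info W' p \<le> mutual_info W p"
proof -
  have "(\<integral>x. - info_loss x \<partial>joint_dist p W) \<le> (\<integral>x. (loss_ratio x - 1) / ln 2 \<partial>joint_dist p W)"
    using integral_info_loss(1) loss_ratio_integrable(1) info_loss_eq_neg_log_loss_ratio
    by (intro integral_mono_AE)
       (auto simp: AE_measure_pmf_iff intro!: log_le_minus_one_over_ln)
  also have "\<dots> = (integral\<^sup>L (joint_dist p W) loss_ratio - 1) / ln 2"
    using loss_ratio_integrable(1) by (simp add: Bochner_Integration.integral_diff)
  also have "\<dots> \<le> 0"
    using loss_ratio_integrable(2) by (simp add: divide_nonpos_pos)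
  finally show ?thesis
    using integral_info_loss(2) by simp
qed

lemma prob_neg_info_loss_ge:
  assumes "0 < c"
  shows "measure_pmf.prob (joint_dist p W) {x. c \<le> - info_loss x} \<le> 1 / 2 powr c"
proof -
  let ?J = "joint_dist p W"
  have "measure_pmf.prob ?J {x. c \<le> - info_loss x} = measure_pmf.prob ?J ({x. c \<le> - info_loss x} \<inter> set_pmf ?J)"
    by (simp add: measure_Int_set_pmf)
  also have "\<dots> \<le> measure_pmf.prob ?J {x. 2 powr c \<le> loss_ratio x}"
    using info_loss_eq_neg_log_loss_ratio
    by (intro measure_pmf.finite_measure_mono) (auto simp: le_log_iff)
  also have "\<dots> \<le> 1 / 2 powr c"
    using info_loss_eq_neg_log_loss_ratio(2) nn_integral_loss_ratio
    by (intro prob_ge_le_of_nn_integral_le_1) (auto simp: AE_measure_pmf_iff less_imp_le)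
  finally show ?thesis .
qed

end

locale almost_injective_merge = merged_channel W W' f p
  for W :: "'a \<Rightarrow> 'b::countable pmf" and W' :: "'a \<Rightarrow> 'c pmf" and f :: "'b \<Rightarrow> 'c"
    and p :: "'a pmf" +
  fixes A :: "'b set" and \<beta> :: real
  assumes inj_on_A: "inj_on f A"
    and prob_outside_A: "\<And>a. a \<in> set_pmf p \<Longrightarrow> measure_pmf.prob (W a) (- A) \<le> \<beta>"
begin

lemma beta_nonneg: "0 \<le> \<beta>"
proof -
  obtain a where "a \<in> set_pmf p" using set_pmf_not_empty by fastforce
  from prob_outside_A[OF this] show ?thesis by (meson measure_nonneg order_trans)
qed

definition out_ratio :: "'a \<times> 'b \<Rightarrow> real" where
  "out_ratio x = indicator A (snd x) * pmf (out_dist p W') (f (snd x)) / pmf (out_dist p W) (snd x)"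

lemma out_ratio_nonneg: "0 \<le> out_ratio x"
  by (simp add: out_ratio_def)

lemma info_loss_le_log_out_ratio:
  assumes x: "x \<in> set_pmf (joint_dist p W)" and "snd x \<in> A"
  shows "info_loss x \<le> log 2 (out_ratio x)" "0 < out_ratio x"
proof -
  note s = joint_support[OF x]
  have pos: "0 < pmf (W' (fst x)) (f (snd x))" "0 < pmf (out_dist p W') (f (snd x))"
    using s by linarith+
  show "0 < out_ratio x"
    using s pos \<open>snd x \<in> A\<close> by (simp add: out_ratio_def)
  have "info_loss x = log 2 (pmf (W (fst x)) (snd x)) - log 2 (pmf (W' (fst x)) (f (snd x)))
        + log 2 (out_ratio x)"
    using s pos \<open>snd x \<in> A\<close>
    by (simp add: info_loss_def out_ratio_def info_dens_on_support log_divide)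
  moreover have "log 2 (pmf (W (fst x)) (snd x)) \<le> log 2 (pmf (W' (fst x)) (f (snd x)))"
    using s by simp
  ultimately show "info_loss x \<le> log 2 (out_ratio x)" by linarith
qed

text \<open>Injectivity of \<open>f\<close> on \<open>A\<close> bounds this by the mass of \<open>f ` A\<close>.\<close>
lemma nn_integral_out_ratio: "(\<integral>\<^sup>+x. out_ratio x \<partial>joint_dist p W) \<le> 1"
proof -
  let ?q = "out_dist p W" and ?q' = "out_dist p W'"
  let ?h = "\<lambda>b. ennreal (indicator A b * pmf ?q' (f b) / pmf ?q b)"
  have "(\<integral>\<^sup>+x. out_ratio x \<partial>joint_dist p W) = (\<integral>\<^sup>+b. ?h b \<partial>map_pmf snd (joint_dist p W))"
    by (simp add: out_ratio_def)
  also have "\<dots> = (\<integral>\<^sup>+b. pmf ?q b * ?h b \<partial>count_space UNIV)"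
    by (simp add: map_snd_joint_dist nn_integral_measure_pmf)
  also have "\<dots> \<le> (\<integral>\<^sup>+b. ennreal (pmf ?q' (f b)) * indicator A b \<partial>count_space UNIV)"
    by (intro nn_integral_mono) (auto simp: ennreal_mult'[symmetric] split: split_indicator)
  also have "\<dots> = (\<integral>\<^sup>+b. pmf ?q' (f b) \<partial>count_space A)"
    by (simp add: nn_integral_count_space_indicator)
  also have "\<dots> = emeasure ?q' (f ` A)"
    by (rule nn_integral_pmf'[OF inj_on_A])
  also have "\<dots> \<le> 1"
    by (simp add: measure_pmf.emeasure_le_1)
  finally show ?thesis .
qed

lemma prob_joint_outside_A: "measure_pmf.prob (joint_dist p W) {x. snd x \<notin> A} \<le> \<beta>"
proof -
  have "measure_pmf.prob (joint_dist p W) {x. snd x \<notin> A} = measure_pmf.prob (out_dist p W) (- A)"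
    by (simp flip: map_snd_joint_dist add: vimage_def Collect_neg_eq[symmetric])
  also have "\<dots> \<le> \<beta>"
  proof -
    have "emeasure (out_dist p W) (- A) = (\<integral>\<^sup>+a. emeasure (W a) (- A) \<partial>p)"
      by (simp add: out_dist_def)
    also have "\<dots> \<le> (\<integral>\<^sup>+a. \<beta> \<partial>p)"
      using prob_outside_A
      by (intro nn_integral_mono_AE)
         (auto simp: AE_measure_pmf_iff measure_pmf.emeasure_eq_measure intro!: ennreal_leI)
    finally show ?thesis
      by (simp add: measure_pmf.emeasure_eq_measure measure_pmf.emeasure_space_1 beta_nonneg)
  qed
  finally show ?thesis .
qed

definition self_info_outside_A :: "'a \<times> 'b \<Rightarrow> real" where
  "self_info_outside_A x = indicator (- A) (snd x) * - log 2 (pmf p (fst x))"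

lemma self_info_outside_A_integrable:
  assumes T: "finite T" "set_pmf p \<subseteq> T"
  shows "integrable (joint_dist p W) self_info_outside_A"
    "integral\<^sup>L (joint_dist p W) self_info_outside_A \<le> \<beta> * log 2 (card T)"
proof -
  have self_info_nonneg: "0 \<le> - log 2 (pmf p a)" if "a \<in> set_pmf p" for a
    using that pmf_le_1 by (simp add: pmf_positive)
  have "(\<integral>\<^sup>+x. self_info_outside_A x \<partial>joint_dist p W)
        = (\<integral>\<^sup>+a. \<integral>\<^sup>+b. ennreal (- log 2 (pmf p a)) * indicator (- A) b \<partial>W a \<partial>p)"
    by (auto simp: joint_dist_def self_info_outside_A_def ennreal_mult' self_info_nonneg
             split: split_indicator intro!: nn_integral_cong_AE simp: AE_measure_pmf_iff)
  also have "\<dots> = (\<integral>\<^sup>+a. ennreal (- log 2 (pmf p a)) * emeasure (W a) (- A) \<partial>p)"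
    by (simp add: nn_integral_cmult_indicator)
  also have "\<dots> \<le> (\<integral>\<^sup>+a. ennreal (- log 2 (pmf p a)) * \<beta> \<partial>p)"
    using prob_outside_A
    by (intro nn_integral_mono_AE)
       (auto simp: AE_measure_pmf_iff measure_pmf.emeasure_eq_measure intro!: mult_left_mono ennreal_leI)
  also have "\<dots> = (\<integral>\<^sup>+a. ennreal (- log 2 (pmf p a) * \<beta>) \<partial>p)"
    by (intro nn_integral_cong_AE)
       (unfold AE_measure_pmf_iff, intro ballI ennreal_mult'[symmetric] self_info_nonneg)
  also have "\<dots> = ennreal ((\<integral>a. - log 2 (pmf p a) \<partial>p) * \<beta>)"
    using finite_support beta_nonneg self_info_nonneg
    by (subst nn_integral_eq_integral)
       (auto simp: integrable_measure_pmf_finite AE_measure_pmf_iff mult_nonpos_nonneg)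
  also have "\<dots> \<le> ennreal (\<beta> * log 2 (card T))"
    using mult_right_mono[OF entropy_le_log_card[OF T] beta_nonneg]
    by (intro ennreal_leI) (simp only: mult.commute)
  finally have bound: "(\<integral>\<^sup>+x. self_info_outside_A x \<partial>joint_dist p W) \<le> ennreal (\<beta> * log 2 (card T))" .
  have "AE x in joint_dist p W. 0 \<le> self_info_outside_A x"
    using self_info_nonneg
    by (auto simp: AE_measure_pmf_iff self_info_outside_A_def set_pmf_joint_dist split: split_indicator)
  moreover have "0 \<le> \<beta> * log 2 (card T)"
  proof -
    have "card T \<noteq> 0"
      using T set_pmf_not_empty[of p] by auto
    then show ?thesis
      using beta_nonneg by simp
  qed
  ultimately show "integrable (joint_dist p W) self_info_outside_A"
    "integral\<^sup>L (joint_dist p W) self_info_outside_A \<le> \<beta> * log 2 (card T)"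
    using nn_integral_bound_integrable bound by blast+
qed

lemma info_loss_le:
  assumes x: "x \<in> set_pmf (joint_dist p W)"
  shows "info_loss x \<le> out_ratio x / ln 2 + self_info_outside_A x + inv_dens W' p (fst x) (f (snd x)) / ln 2"
proof (cases "snd x \<in> A")
  case True
  have "info_loss x \<le> (out_ratio x - 1) / ln 2"
    using info_loss_le_log_out_ratio[OF x True] log_le_minus_one_over_ln[of 2 "out_ratio x"] by simp
  moreover have "(out_ratio x - 1) / ln 2 \<le> out_ratio x / ln 2"
    by (simp add: divide_right_mono)
  moreover have "0 \<le> inv_dens W' p (fst x) (f (snd x)) / ln 2"
    by (simp add: inv_dens_def)
  ultimately show ?thesis
    using True by (simp add: self_info_outside_A_def)
next
  case False
  note s = joint_support[OF x]
  have "info_dens W p (fst x) (snd x) \<le> - log 2 (pmf p (fst x))"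
    using s by (intro info_dens_le_neg_log_pmf)
  moreover have "- info_dens W' p (fst x) (f (snd x)) \<le> (inv_dens W' p (fst x) (f (snd x)) - 1) / ln 2"
    using s by (intro neg_info_dens_le_inv_dens)
  moreover have "(inv_dens W' p (fst x) (f (snd x)) - 1) / ln 2 \<le> inv_dens W' p (fst x) (f (snd x)) / ln 2"
    by (simp add: divide_right_mono)
  ultimately show ?thesis
    using False by (simp add: info_loss_def self_info_outside_A_def out_ratio_def)
qed

lemma mutual_info_le_merged_plus:
  assumes T: "finite T" "set_pmf p \<subseteq> T"
  shows "mutual_info W p \<le> mutual_info W' p + 2 / ln 2 + \<beta> * log 2 (card T)"
proof -
  let ?J = "joint_dist p W"
  let ?inv = "\<lambda>x. inv_dens W' p (fst x) (f (snd x))"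
  have out_ratio_int: "integrable ?J out_ratio" "integral\<^sup>L ?J out_ratio \<le> 1"
    using subdensity_integrable[OF _ nn_integral_out_ratio] out_ratio_nonneg by simp_all
  have "integrable (joint_dist p W') (\<lambda>x. inv_dens W' p (fst x) (snd x))"
    "(\<integral>x. inv_dens W' p (fst x) (snd x) \<partial>joint_dist p W') \<le> 1"
    by (rule inv_dens_integrable)+
  then have inv_int: "integrable ?J ?inv" "integral\<^sup>L ?J ?inv \<le> 1"
    by (simp_all add: joint_dist_merged)
  note bad_int = self_info_outside_A_integrable[OF T]
  have "integral\<^sup>L ?J info_loss \<le> (\<integral>x. out_ratio x / ln 2 + self_info_outside_A x + ?inv x / ln 2 \<partial>?J)"
    using integral_info_loss(1) out_ratio_int(1) bad_int(1) inv_int(1) info_loss_le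
    by (intro integral_mono_AE) (auto simp: AE_measure_pmf_iff)
  also have "\<dots> = integral\<^sup>L ?J out_ratio / ln 2 + integral\<^sup>L ?J self_info_outside_A + integral\<^sup>L ?J ?inv / ln 2"
    using out_ratio_int(1) bad_int(1) inv_int(1) by simp
  also have "\<dots> \<le> 1 / ln 2 + \<beta> * log 2 (card T) + 1 / ln 2"
    using out_ratio_int(2) bad_int(2) inv_int(2) by (intro add_mono divide_right_mono) auto
  finally show ?thesis
    using integral_info_loss(2) by simp
qed

lemma prob_abs_info_loss_ge:
  assumes "0 < c"
  shows "measure_pmf.prob (joint_dist p W) {x. c \<le> \<bar>info_loss x\<bar>} \<le> \<beta> + 2 / 2 powr c"
proof -
  let ?J = "joint_dist p W"
  let ?P = "\<lambda>S. measure_pmf.prob ?J S"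
  have "{x. c \<le> \<bar>info_loss x\<bar>} \<inter> set_pmf ?J
        \<subseteq> {x. snd x \<notin> A} \<union> {x. 2 powr c \<le> out_ratio x} \<union> {x. c \<le> - info_loss x}"
  proof (intro subsetI)
    fix x assume "x \<in> {x. c \<le> \<bar>info_loss x\<bar>} \<inter> set_pmf ?J"
    then have "c \<le> \<bar>info_loss x\<bar>" and x: "x \<in> set_pmf ?J" by auto
    moreover have "2 powr c \<le> out_ratio x" if "snd x \<in> A" "c \<le> info_loss x"
    proof -
      have "c \<le> log 2 (out_ratio x)"
        using info_loss_le_log_out_ratio(1)[OF x that(1)] that(2) by linarith
      then show ?thesis
        using info_loss_le_log_out_ratio(2)[OF x that(1)] by (simp add: le_log_iff)
    qed
    ultimately show "x \<in> {x. snd x \<notin> A} \<union> {x. 2 powr c \<le> out_ratio x} \<union> {x. c \<le> - info_loss x}"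
      by (cases "snd x \<in> A"; cases "0 \<le> info_loss x") auto
  qed
  then have "?P {x. c \<le> \<bar>info_loss x\<bar>}
        \<le> ?P ({x. snd x \<notin> A} \<union> {x. 2 powr c \<le> out_ratio x} \<union> {x. c \<le> - info_loss x})"
    by (subst measure_Int_set_pmf[symmetric]) (intro measure_pmf.finite_measure_mono, auto)
  also have "\<dots> \<le> ?P {x. snd x \<notin> A} + ?P {x. 2 powr c \<le> out_ratio x} + ?P {x. c \<le> - info_loss x}"
    by (intro measure_pmf_subadditive[THEN order_trans] add_right_mono measure_pmf_subadditive)
  also have "\<dots> \<le> \<beta> + 1 / 2 powr c + 1 / 2 powr c"
    using prob_joint_outside_A prob_neg_info_loss_ge[OF \<open>0 < c\<close>]
      prob_ge_le_of_nn_integral_le_1[OF _ nn_integral_out_ratio, of "2 powr c"]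
    by (intro add_mono) (auto simp: out_ratio_nonneg)
  finally show ?thesis by simp
qed

end

section \<open>Channel sequences\<close>

lemma finite_inputs: "finite (inputs n :: 'x::finite list set)"
  unfolding inputs_def using finite_lists_length_eq[of "UNIV :: 'x set" n] by simp

lemma card_inputs: "card (inputs n :: 'x::finite list set) = CARD('x) ^ n"
  unfolding inputs_def using card_lists_length_eq[of "UNIV :: 'x set" n] by simp

lemma chan_info_le_plus:
  fixes W :: "'x::finite list \<Rightarrow> 'b pmf" and W' :: "'x list \<Rightarrow> 'c pmf"
  assumes "\<And>p. set_pmf p \<subseteq> inputs n \<Longrightarrow> mutual_info W p \<le> mutual_info W' p + c"
  shows "chan_info W n \<le> chan_info W' n + c"
proof -
  let ?P = "{p. set_pmf p \<subseteq> inputs n}"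
  have chan_info_eq: "chan_info V n = Sup ((\<lambda>p. mutual_info V p) ` ?P)" for V :: "'x list \<Rightarrow> 'd pmf"
    unfolding chan_info_def by (rule arg_cong[where f=Sup]) auto
  have "return_pmf (replicate n undefined) \<in> ?P"
    by (simp add: inputs_def)
  then have nonempty: "?P \<noteq> {}" by blast
  have "bdd_above ((\<lambda>p. mutual_info W' p) ` ?P)"
    using mutual_info_le_log_card[OF finite_inputs] by (intro bdd_aboveI2) auto
  then have "mutual_info W p \<le> chan_info W' n + c" if "p \<in> ?P" for p
    using assms[of p] cSUP_upper[OF that] that by (fastforce simp: chan_info_eq)
  then show ?thesis
    unfolding chan_info_eq[of W] by (intro cSUP_least nonempty)
qed

lemma coding_scheme_pullback:
  assumes merged: "\<And>x. x \<in> S \<Longrightarrow> W' x = map_pmf f (W x)"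
    and "coding_scheme W' S M \<epsilon>"
  shows "coding_scheme W S M \<epsilon>"
proof -
  obtain x R where x: "inj_on x {..<M}" "x ` {..<M} \<subseteq> S" and R: "disjoint_family_on R {..<M}"
    and err: "\<And>i. i < M \<Longrightarrow> measure_pmf.prob (W' (x i)) (- R i) \<le> \<epsilon>"
    using assms(2) unfolding coding_scheme_def by blast
  have "measure_pmf.prob (W (x i)) (- (f -` R i)) \<le> \<epsilon>" if "i < M" for i
    using err[OF that] x(2) that by (auto simp: merged vimage_Compl)
  moreover have "disjoint_family_on (\<lambda>i. f -` R i) {..<M}"
    using R by (auto simp: disjoint_family_on_def)
  ultimately show ?thesis
    unfolding coding_scheme_def using x by blast
qed

lemma coding_scheme_pushforward:
  assumes merged: "\<And>x. x \<in> S \<Longrightarrow> W' x = map_pmf f (W x)"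
    and inj: "inj_on f A" and outside_A: "\<And>x. x \<in> S \<Longrightarrow> measure_pmf.prob (W x) (- A) \<le> \<beta>"
    and "coding_scheme W S M \<epsilon>"
  shows "coding_scheme W' S M (\<epsilon> + \<beta>)"
proof -
  obtain x R where x: "inj_on x {..<M}" "x ` {..<M} \<subseteq> S" and R: "disjoint_family_on R {..<M}"
    and err: "\<And>i. i < M \<Longrightarrow> measure_pmf.prob (W (x i)) (- R i) \<le> \<epsilon>"
    using assms(4) unfolding coding_scheme_def by blast
  have "disjoint_family_on (\<lambda>i. f ` (R i \<inter> A)) {..<M}"
    using R inj unfolding disjoint_family_on_def inj_on_def by blast
  moreover have "measure_pmf.prob (W' (x i)) (- (f ` (R i \<inter> A))) \<le> \<epsilon> + \<beta>" if "i < M" for i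
  proof -
    have xi: "x i \<in> S" using x(2) that by auto
    have "measure_pmf.prob (W' (x i)) (- (f ` (R i \<inter> A))) = measure_pmf.prob (W (x i)) (f -` (- (f ` (R i \<inter> A))))"
      by (simp add: merged[OF xi])
    also have "\<dots> \<le> measure_pmf.prob (W (x i)) (- R i \<union> - A)"
      by (rule measure_pmf.finite_measure_mono) auto
    also have "\<dots> \<le> \<epsilon> + \<beta>"
      using measure_pmf_subadditive err[OF that] outside_A[OF xi] by (rule order_trans[OF _ add_mono])
    finally show ?thesis .
  qed
  ultimately show ?thesis
    unfolding coding_scheme_def using x by blast
qed

lemma coding_scheme_mono: "coding_scheme W S M \<epsilon> \<Longrightarrow> \<epsilon> \<le> \<epsilon>' \<Longrightarrow> coding_scheme W S M \<epsilon>'"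
  unfolding coding_scheme_def by (meson order_trans)

lemma tendsto_iff_of_gap:
  fixes a b c :: "nat \<Rightarrow> real"
  assumes "\<And>n. b n \<le> a n" "\<And>n. a n \<le> b n + c n" "c \<longlonglongrightarrow> 0"
  shows "a \<longlonglongrightarrow> L \<longleftrightarrow> b \<longlonglongrightarrow> L"
proof -
  have "(\<lambda>n. a n - b n) \<longlonglongrightarrow> 0"
    using assms by (intro tendsto_sandwich[OF _ _ tendsto_const \<open>c \<longlonglongrightarrow> 0\<close>]) (auto simp: algebra_simps)
  from tendsto_diff[OF _ this, of a L] tendsto_add[OF _ this, of b L] show ?thesis
    by auto
qed

lemma deviation_tendsto_0_transfer:
  fixes M :: "nat \<Rightarrow> 'a pmf" and F G :: "nat \<Rightarrow> 'a \<Rightarrow> real"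
  assumes gap: "\<And>\<epsilon>. \<epsilon> > 0 \<Longrightarrow> (\<lambda>n. measure_pmf.prob (M n) {x. \<epsilon> \<le> \<bar>F n x - G n x\<bar>}) \<longlonglongrightarrow> 0"
    and F: "\<And>\<delta>. \<delta> > 0 \<Longrightarrow> (\<lambda>n. measure_pmf.prob (M n) {x. \<delta> < \<bar>F n x - I\<bar>}) \<longlonglongrightarrow> 0"
    and "\<delta> > 0"
  shows "(\<lambda>n. measure_pmf.prob (M n) {x. \<delta> < \<bar>G n x - I\<bar>}) \<longlonglongrightarrow> 0"
proof (rule tendsto_sandwich[OF _ _ tendsto_const])
  let ?u = "\<lambda>n. measure_pmf.prob (M n) {x. \<delta> / 2 < \<bar>F n x - I\<bar>}
                 + measure_pmf.prob (M n) {x. \<delta> / 2 \<le> \<bar>F n x - G n x\<bar>}"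
  have "\<delta> / 2 < \<bar>F n x - I\<bar> \<or> \<delta> / 2 \<le> \<bar>F n x - G n x\<bar>" if "\<delta> < \<bar>G n x - I\<bar>" for n x
    using that by linarith
  then have "measure_pmf.prob (M n) {x. \<delta> < \<bar>G n x - I\<bar>}
        \<le> measure_pmf.prob (M n) ({x. \<delta> / 2 < \<bar>F n x - I\<bar>} \<union> {x. \<delta> / 2 \<le> \<bar>F n x - G n x\<bar>})" for n
    by (intro measure_pmf.finite_measure_mono) auto
  then show "\<forall>\<^sub>F n in sequentially. measure_pmf.prob (M n) {x. \<delta> < \<bar>G n x - I\<bar>} \<le> ?u n"
    using measure_pmf_subadditive order_trans by (intro always_eventually allI) blast
  have "\<delta> / 2 > 0" using \<open>\<delta> > 0\<close> by simp
  from tendsto_add[OF F[OF this] gap[OF this]] show "?u \<longlonglongrightarrow> 0"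
    by simp
qed simp

lemma deviation_tendsto_0_iff:
  fixes M :: "nat \<Rightarrow> 'a pmf" and F G :: "nat \<Rightarrow> 'a \<Rightarrow> real"
  assumes "\<And>\<epsilon>. \<epsilon> > 0 \<Longrightarrow> (\<lambda>n. measure_pmf.prob (M n) {x. \<epsilon> \<le> \<bar>F n x - G n x\<bar>}) \<longlonglongrightarrow> 0"
  shows "(\<forall>\<delta>>0. (\<lambda>n. measure_pmf.prob (M n) {x. \<delta> < \<bar>F n x - I\<bar>}) \<longlonglongrightarrow> 0) \<longleftrightarrow>
         (\<forall>\<delta>>0. (\<lambda>n. measure_pmf.prob (M n) {x. \<delta> < \<bar>G n x - I\<bar>}) \<longlonglongrightarrow> 0)"
  using deviation_tendsto_0_transfer[of M F G] deviation_tendsto_0_transfer[of M G F] assms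
  by (auto simp: abs_minus_commute)

locale merged_channel_sequence =
  fixes U :: "nat \<Rightarrow> 'x::finite list \<Rightarrow> 'y::countable pmf" and V :: "nat \<Rightarrow> 'x list \<Rightarrow> 'z pmf"
    and f :: "nat \<Rightarrow> 'y \<Rightarrow> 'z" and A :: "nat \<Rightarrow> 'y set" and \<beta> :: "nat \<Rightarrow> real"
  assumes merged: "\<And>n x. x \<in> inputs n \<Longrightarrow> V n x = map_pmf (f n) (U n x)"
    and inj_on_A: "\<And>n. inj_on (f n) (A n)"
    and prob_outside_A: "\<And>n x. x \<in> inputs n \<Longrightarrow> measure_pmf.prob (U n x) (- A n) \<le> \<beta> n"
    and beta_tendsto_0: "\<beta> \<longlonglongrightarrow> 0"
begin

lemma almost_injective_merge_at:
  assumes "set_pmf p \<subseteq> inputs n"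
  shows "almost_injective_merge (U n) (V n) (f n) p (A n) (\<beta> n)"
  using assms finite_subset[OF assms finite_inputs] merged inj_on_A prob_outside_A
  by unfold_locales auto

lemma merged_channel_at: "set_pmf p \<subseteq> inputs n \<Longrightarrow> merged_channel (U n) (V n) (f n) p"
  using almost_injective_merge.axioms(1)[OF almost_injective_merge_at] .

lemma achievable_iff: "achievable U R \<longleftrightarrow> achievable V R"
proof
  assume "achievable V R"
  then show "achievable U R"
    unfolding achievable_def using coding_scheme_pullback merged by meson
next
  assume U: "achievable U R"
  show "achievable V R"
    unfolding achievable_def
  proof (intro conjI allI impI)
    show "0 \<le> R" using U by (simp add: achievable_def)
    fix \<epsilon> :: real assume "0 < \<epsilon>"
    then obtain n0 where
      n0: "\<And>n. n \<ge> n0 \<Longrightarrow> coding_scheme (U n) (inputs n) (nat \<lceil>2 powr (real n * R)\<rceil>) (\<epsilon> / 2)"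
      using U unfolding achievable_def by (meson half_gt_zero)
    obtain n1 where n1: "\<And>n. n \<ge> n1 \<Longrightarrow> \<beta> n < \<epsilon> / 2"
      using order_tendstoD(2)[OF beta_tendsto_0, of "\<epsilon> / 2"] \<open>0 < \<epsilon>\<close>
      by (auto simp: eventually_sequentially)
    have "coding_scheme (V n) (inputs n) (nat \<lceil>2 powr (real n * R)\<rceil>) \<epsilon>" if "n \<ge> max n0 n1" for n
    proof (rule coding_scheme_mono)
      show "coding_scheme (V n) (inputs n) (nat \<lceil>2 powr (real n * R)\<rceil>) (\<epsilon> / 2 + \<beta> n)"
        using that by (intro coding_scheme_pushforward[OF merged inj_on_A prob_outside_A n0]) auto
      show "\<epsilon> / 2 + \<beta> n \<le> \<epsilon>"
        using n1[of n] that by simp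
    qed
    then show "\<exists>n0. \<forall>n\<ge>n0. coding_scheme (V n) (inputs n) (nat \<lceil>2 powr (real n * R)\<rceil>) \<epsilon>"
      by blast
  qed
qed

lemma capacity_eq: "capacity U = capacity V"
proof -
  have "{R. achievable U R} = {R. achievable V R}"
    using achievable_iff by blast
  then show ?thesis
    by (simp add: capacity_def)
qed

lemma chan_info_rate_tendsto_iff:
  "(\<lambda>n. chan_info (U n) n / n) \<longlonglongrightarrow> L \<longleftrightarrow> (\<lambda>n. chan_info (V n) n / n) \<longlonglongrightarrow> L"
proof (rule tendsto_iff_of_gap)
  define gap where "gap n = 2 / ln 2 + \<beta> n * (n * log 2 CARD('x))" for n
  have "chan_info (V n) n \<le> chan_info (U n) n + 0" for n
    using merged_channel.mutual_info_merged_le[OF merged_channel_at]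
    by (intro chan_info_le_plus) auto
  then show "chan_info (V n) n / n \<le> chan_info (U n) n / n" for n
    by (simp add: divide_right_mono)
  have "chan_info (U n) n \<le> chan_info (V n) n + gap n" for n
    using almost_injective_merge.mutual_info_le_merged_plus[OF almost_injective_merge_at finite_inputs]
    by (intro chan_info_le_plus) (auto simp: gap_def card_inputs log_nat_power add.assoc)
  then show "chan_info (U n) n / n \<le> chan_info (V n) n / n + gap n / n" for n
    by (simp add: divide_right_mono flip: add_divide_distrib)
  have "(\<lambda>n. 2 / ln 2 * inverse (real n) + \<beta> n * log 2 CARD('x)) \<longlonglongrightarrow> 2 / ln 2 * 0 + 0 * log 2 CARD('x)"
    by (intro tendsto_intros beta_tendsto_0 lim_inverse_n)
  moreover have "\<forall>\<^sub>F n in sequentially. 2 / ln 2 * inverse (real n) + \<beta> n * log 2 CARD('x) = gap n / n"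
    by (auto simp: eventually_sequentially gap_def field_simps intro!: exI[of _ 1])
  ultimately show "(\<lambda>n. gap n / n) \<longlonglongrightarrow> 0"
    by (simp add: tendsto_cong)
qed

lemma info_rate_exists_iff: "info_rate_exists U \<longleftrightarrow> info_rate_exists V"
  unfolding info_rate_exists_def convergent_def using chan_info_rate_tendsto_iff by simp

lemma info_rate_eq:
  assumes "info_rate_exists U"
  shows "info_rate U = info_rate V"
proof -
  obtain L where "(\<lambda>n. chan_info (U n) n / n) \<longlonglongrightarrow> L"
    using assms unfolding info_rate_exists_def convergent_def by blast
  moreover from this have "(\<lambda>n. chan_info (V n) n / n) \<longlonglongrightarrow> L"
    using chan_info_rate_tendsto_iff by blast
  ultimately show ?thesis
    unfolding info_rate_def by (simp add: limI)
qed

lemma info_dens_gap_tendsto_0: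
  assumes p: "\<And>n. set_pmf (p n) \<subseteq> inputs n" and "\<epsilon> > 0"
  shows "(\<lambda>n. measure_pmf.prob (joint_dist (p n) (U n))
            {x. \<epsilon> \<le> \<bar>info_dens (U n) (p n) (fst x) (snd x) / n
                      - info_dens (V n) (p n) (fst x) (f n (snd x)) / n\<bar>}) \<longlonglongrightarrow> 0"
proof (rule tendsto_sandwich[OF _ _ tendsto_const])
  show "(\<lambda>n. \<beta> n + 2 / 2 powr (\<epsilon> * n)) \<longlonglongrightarrow> 0"
  proof -
    have "(\<lambda>n. 2 * inverse ((2 powr \<epsilon>) ^ n)) \<longlonglongrightarrow> 2 * 0"
      using \<open>\<epsilon> > 0\<close> by (intro tendsto_intros LIMSEQ_inverse_realpow_zero) simp
    then have "(\<lambda>n. 2 / 2 powr (\<epsilon> * n)) \<longlonglongrightarrow> 0"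
      by (simp add: powr_powr[symmetric] powr_realpow divide_inverse mult.commute)
    from tendsto_add[OF beta_tendsto_0 this] show ?thesis by simp
  qed
  have "measure_pmf.prob (joint_dist (p n) (U n))
          {x. \<epsilon> \<le> \<bar>info_dens (U n) (p n) (fst x) (snd x) / n - info_dens (V n) (p n) (fst x) (f n (snd x)) / n\<bar>}
        \<le> \<beta> n + 2 / 2 powr (\<epsilon> * n)" if "n \<ge> 1" for n
  proof -
    interpret almost_injective_merge "U n" "V n" "f n" "p n" "A n" "\<beta> n"
      by (rule almost_injective_merge_at[OF p])
    have "\<epsilon> \<le> \<bar>u / n - v / n\<bar> \<longleftrightarrow> \<epsilon> * n \<le> \<bar>u - v\<bar>" for u v
      using that by (simp add: le_divide_eq flip: diff_divide_distrib)
    then show ?thesis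
      using prob_abs_info_loss_ge[of "\<epsilon> * n"] \<open>\<epsilon> > 0\<close> that by (simp add: info_loss_def)
  qed
  then show "\<forall>\<^sub>F n in sequentially. measure_pmf.prob (joint_dist (p n) (U n))
          {x. \<epsilon> \<le> \<bar>info_dens (U n) (p n) (fst x) (snd x) / n - info_dens (V n) (p n) (fst x) (f n (snd x)) / n\<bar>}
        \<le> \<beta> n + 2 / 2 powr (\<epsilon> * n)"
    by (auto simp: eventually_sequentially)
qed simp

lemma strictly_info_stable_iff: "strictly_info_stable U \<longleftrightarrow> strictly_info_stable V"
proof -
  have "(\<forall>\<delta>>0. (\<lambda>n. measure_pmf.prob (joint_dist (p n) (U n))
            {(x, y). \<bar>info_dens (U n) (p n) x y / n - I\<bar> > \<delta>}) \<longlonglongrightarrow> 0) \<longleftrightarrow>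
        (\<forall>\<delta>>0. (\<lambda>n. measure_pmf.prob (joint_dist (p n) (V n))
            {(x, z). \<bar>info_dens (V n) (p n) x z / n - I\<bar> > \<delta>}) \<longlonglongrightarrow> 0)"
    if p: "\<And>n. set_pmf (p n) \<subseteq> inputs n" for p I
  proof -
    have "measure_pmf.prob (joint_dist (p n) (V n)) {(x, z). \<bar>info_dens (V n) (p n) x z / n - I\<bar> > \<delta>}
        = measure_pmf.prob (joint_dist (p n) (U n))
            {x. \<delta> < \<bar>info_dens (V n) (p n) (fst x) (f n (snd x)) / n - I\<bar>}" for n \<delta>
      using merged_channel.prob_joint_dist_merged[OF merged_channel_at[OF p]]
      by (simp add: vimage_def split_beta')
    then show ?thesis
      using deviation_tendsto_0_iff[OF info_dens_gap_tendsto_0[OF p]] by (simp add: split_beta')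
  qed
  note deviation_iff = this
  show ?thesis
  proof (cases "info_rate_exists U")
    case True
    then show ?thesis
      unfolding strictly_info_stable_def
      using deviation_iff[where I="info_rate U"] info_rate_exists_iff info_rate_eq[OF True] by auto
  next
    case False
    then show ?thesis
      unfolding strictly_info_stable_def using info_rate_exists_iff by blast
  qed
qed

end

theorem proposition7:
  fixes U :: "nat \<Rightarrow> 'x::finite list \<Rightarrow> 'y::countable pmf"
    and V :: "nat \<Rightarrow> 'x list \<Rightarrow> 'z::countable pmf"
    and f :: "nat \<Rightarrow> 'y \<Rightarrow> 'z"
    and A B :: "nat \<Rightarrow> 'y set"
    and A' B' :: "nat \<Rightarrow> 'z set"
  assumes V_def: "\<And>n x. x \<in> inputs n \<Longrightarrow> V n x = map_pmf (f n) (U n x)"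
    and Y_part: "\<And>n. A n \<inter> B n = {} \<and> A n \<union> B n = UNIV"
    and Z_part: "\<And>n. A' n \<inter> B' n = {} \<and> A' n \<union> B' n = UNIV"
    and f_bij: "\<And>n. bij_betw (f n) (A n) (A' n)"
    and beta_lim: "(\<lambda>n. Max ((\<lambda>x. measure_pmf.prob (U n x) (B n)) ` inputs n)) \<longlonglongrightarrow> 0"
  shows "capacity U = capacity V \<and>
         ((info_rate_exists U \<or> info_rate_exists V) \<longrightarrow>
            info_rate_exists U \<and> info_rate_exists V \<and> info_rate U = info_rate V) \<and>
         (strictly_info_stable U \<longleftrightarrow> strictly_info_stable V)"
proof -
  define \<beta> where "\<beta> n = Max ((\<lambda>x. measure_pmf.prob (U n x) (B n)) ` inputs n)" for n
  have "B n = - A n" for n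
    using Y_part[of n] by auto
  then have "measure_pmf.prob (U n x) (- A n) \<le> \<beta> n" if "x \<in> inputs n" for n x
    unfolding \<beta>_def using that finite_inputs by (intro Max_ge) auto
  moreover have "inj_on (f n) (A n)" for n
    using f_bij[of n] by (simp add: bij_betw_def)
  ultimately interpret merged_channel_sequence U V f A \<beta>
    using V_def beta_lim by unfold_locales (simp_all add: \<beta>_def[abs_def])
  show ?thesis
    using capacity_eq info_rate_exists_iff info_rate_eq strictly_info_stable_iff by blast
qed

end
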